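(* There exist solutions $u\in C(G^h)$ of $F^{W,h}[u](x)=0$ for all $x\in G^h$, and they are fixed points of the map $T:C(G^h)\to C(G^h)$ given by $$T(u)(x)=\min_{v\in\mathcal{D}^W}\min\Big(g(x),\ \frac{u(x+hv)+u(x-hv)}{2}\Big)\ \ (x\in G^h_V),\qquad T(u)(x)=g(x)\ \ (x\in\partial G^h).$$
   Context: Let $\Omega\subset D=[-1,1]^n$, $h>0$, $g\in C(G^h)$. Grid: $G^h=\{x\in h\mathbb{Z}^n: x\in D\}$, $G^h_V=\Omega\cap G^h$, $\partial G^h=G^h\setminus G^h_V$; $C(G^h)$ is the set of functions $G^h\to\mathbb{R}$. A grid direction set $\mathcal{D}^W$ is a finite set of nonzero vectors of $\mathbb{Z}^n$ spanning $\mathbb{R}^n$ and closed under $v\mapsto-v$; $h$ is assumed small enough that $x\pm hv\in G^h$ for all $x\in G^h_V$, $v\in\mathcal{D}^W$. For $v\in\mathcal{D}^W$, $D^h_{vv}u(x)=\frac{u(x+hv)-2u(x)+u(x-hv)}{h^2\|v\|^2}$ ($x\in G^h_V$), $\lambda^h_{\mathcal{D}^W}[u](x)=\min_{v\in\mathcal{D}^W}D^h_{vv}u(x)$, and $F^{W,h}[u](x)=\max\{u(x)-g(x),-\lambda^h_{\mathcal{D}^W}[u](x)\}$ for $x\in G^h_V$, $F^{W,h}[u](x)=u(x)-g(x)$ for $x\in\partial G^h$. *)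

theory Defs
  imports "HOL-Analysis.Analysis"
begin

definition cubeD :: "(real ^ 'n) set" where
  "cubeD = {x. \<forall>i. -1 \<le> x $ i \<and> x $ i \<le> 1}"

definition grid :: "real \<Rightarrow> (real ^ 'n) set" where
  "grid h = {x \<in> cubeD. \<forall>i. \<exists>k::int. x $ i = h * of_int k}"

definition gridV :: "(real ^ 'n) set \<Rightarrow> real \<Rightarrow> (real ^ 'n) set" where
  "gridV \<Omega> h = \<Omega> \<inter> grid h"

definition gridB :: "(real ^ 'n) set \<Rightarrow> real \<Rightarrow> (real ^ 'n) set" where
  "gridB \<Omega> h = grid h - gridV \<Omega> h"

definition grid_direction_set :: "(real ^ 'n) set \<Rightarrow> bool" where
  "grid_direction_set DW \<longleftrightarrow> finite DW \<and>
     (\<forall>v\<in>DW. v \<noteq> 0 \<and> (\<forall>i. v $ i \<in> \<int>)) \<and>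
     span DW = UNIV \<and> (\<forall>v\<in>DW. - v \<in> DW)"

definition Dvv :: "real \<Rightarrow> (real ^ 'n \<Rightarrow> real) \<Rightarrow> real ^ 'n \<Rightarrow> real ^ 'n \<Rightarrow> real" where
  "Dvv h u x v = (u (x + h *\<^sub>R v) - 2 * u x + u (x - h *\<^sub>R v)) / (h\<^sup>2 * (norm v)\<^sup>2)"

definition lambdaW :: "(real ^ 'n) set \<Rightarrow> real \<Rightarrow> (real ^ 'n \<Rightarrow> real) \<Rightarrow> real ^ 'n \<Rightarrow> real" where
  "lambdaW DW h u x = Min ((\<lambda>v. Dvv h u x v) ` DW)"

definition FWh :: "(real ^ 'n) set \<Rightarrow> (real ^ 'n) set \<Rightarrow> real \<Rightarrow> (real ^ 'n \<Rightarrow> real)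
    \<Rightarrow> (real ^ 'n \<Rightarrow> real) \<Rightarrow> real ^ 'n \<Rightarrow> real" where
  "FWh \<Omega> DW h g u x =
     (if x \<in> gridV \<Omega> h then max (u x - g x) (- lambdaW DW h u x) else u x - g x)"

definition Tmap :: "(real ^ 'n) set \<Rightarrow> (real ^ 'n) set \<Rightarrow> real \<Rightarrow> (real ^ 'n \<Rightarrow> real)
    \<Rightarrow> (real ^ 'n \<Rightarrow> real) \<Rightarrow> real ^ 'n \<Rightarrow> real" where
  "Tmap \<Omega> DW h g u x =
     (if x \<in> gridV \<Omega> h
      then Min ((\<lambda>v. min (g x) ((u (x + h *\<^sub>R v) + u (x - h *\<^sub>R v)) / 2)) ` DW)
      else g x)"

end

theory Submission
  imports Defs
begin

text \<open>
  Perron's method on the finite grid. Call w a subsolution if w \<le> g on the grid and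
  2 w(x) \<le> w(x + hv) + w(x - hv) at interior points, i.e. all second differences are
  nonnegative. The constant min g is one, and the pointwise supremum u of all
  subsolutions is again one. For any subsolution, u \<le> T(u), and raising u at a single
  point x to T(u)(x) keeps it a subsolution; by maximality, T(u) = u. Since every
  weight 1/(h^2 |v|^2) is positive, T(u)(x) = u(x) says exactly that
  u(x) \<le> g(x), all second differences are nonnegative, and one of them vanishes
  unless u(x) = g(x). That is the equation F[u](x) = 0.
\<close>

lemma finite_grid:
  assumes "h > 0"
  shows "finite (grid h :: (real ^ 'n) set)"
proof -
  define N where "N = \<lceil>1 / h\<rceil>"
  define A where "A = (\<lambda>k::int. h * of_int k) ` {-N..N}"
  have "x $ i \<in> A" if "x \<in> grid h" for x :: "real ^ 'n" and i
  proof -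
    from that obtain k :: int where k: "x $ i = h * of_int k"
      unfolding grid_def by blast
    from that have "\<bar>h * of_int k\<bar> \<le> 1"
      unfolding grid_def cubeD_def k[symmetric] by (auto simp: abs_le_iff)
    then have "\<bar>of_int k\<bar> \<le> 1 / h"
      using assms by (simp add: abs_mult field_simps)
    then have "k \<in> {-N..N}" unfolding N_def by (simp add: abs_le_iff) linarith
    then show ?thesis unfolding A_def k by blast
  qed
  then have "grid h \<subseteq> vec_lambda ` PiE UNIV (\<lambda>_::'n. A)"
    by (auto intro!: image_eqI[where x = "vec_nth _"])
  moreover have "finite A" unfolding A_def by simp
  ultimately show ?thesis by (auto intro: finite_subset simp: finite_PiE)
qed

lemma grid_direction_set_nonempty:
  fixes DW :: "(real ^ 'n) set"
  assumes "grid_direction_set DW"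
  shows "DW \<noteq> {}"
proof
  assume "DW = {}"
  with assms have "{0} = (UNIV :: (real ^ 'n) set)"
    unfolding grid_direction_set_def by simp
  moreover have "(axis undefined 1 :: real ^ 'n) \<noteq> 0"
    by (simp add: axis_eq_0_iff)
  ultimately show False by blast
qed

lemma max_neg_Min_eq_0_iff_Min_min_eq:
  fixes a c :: "'a \<Rightarrow> real"
  assumes "finite V" "V \<noteq> {}" "\<forall>v\<in>V. c v > 0"
  shows "max (y - b) (- Min ((\<lambda>v. c v * (a v - y)) ` V)) = 0
    \<longleftrightarrow> Min ((\<lambda>v. min b (a v)) ` V) = y"
proof -
  have sign_ge: "c v * (a v - y) \<ge> 0 \<longleftrightarrow> a v \<ge> y"
    and sign_le: "c v * (a v - y) \<le> 0 \<longleftrightarrow> a v \<le> y" if "v \<in> V" for v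
    using assms(3) that by (auto simp: zero_le_mult_iff mult_le_0_iff)
  let ?M = "Min ((\<lambda>v. c v * (a v - y)) ` V)"
  have M_ge: "?M \<ge> 0 \<longleftrightarrow> (\<forall>v\<in>V. y \<le> a v)"
    using assms(1,2) sign_ge by (simp add: Min_ge_iff)
  have M_le: "?M \<le> 0 \<longleftrightarrow> (\<exists>v\<in>V. a v \<le> y)"
    using assms(1,2) sign_le by (simp add: Min_le_iff)
  have "max (y - b) (- ?M) = 0 \<longleftrightarrow> y \<le> b \<and> ?M \<ge> 0 \<and> (y = b \<or> ?M \<le> 0)"
    by (auto simp: max_def)
  also have "\<dots> \<longleftrightarrow> y \<le> b \<and> (\<forall>v\<in>V. y \<le> a v) \<and> (y = b \<or> (\<exists>v\<in>V. a v \<le> y))"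
    by (simp only: M_ge M_le)
  also have "\<dots> \<longleftrightarrow> (\<forall>v\<in>V. y \<le> min b (a v)) \<and> (\<exists>v\<in>V. min b (a v) = y)"
  proof -
    obtain v0 where "v0 \<in> V" using assms(2) by blast
    then show ?thesis by (metis antisym min.absorb1 min.absorb2 min.bounded_iff min_def)
  qed
  also have "\<dots> \<longleftrightarrow> Min ((\<lambda>v. min b (a v)) ` V) = y"
    using assms(1,2) by (auto simp: Min_eq_iff)
  finally show ?thesis .
qed

lemma FWh_eq_0_iff_Tmap_fixed:
  fixes x :: "real ^ 'n"
  assumes "finite DW" "DW \<noteq> {}" "\<forall>v\<in>DW. v \<noteq> 0" "h > 0"
  shows "FWh \<Omega> DW h g u x = 0 \<longleftrightarrow> Tmap \<Omega> DW h g u x = u x"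
proof (cases "x \<in> gridV \<Omega> h")
  case True
  define a where "a v = (u (x + h *\<^sub>R v) + u (x - h *\<^sub>R v)) / 2" for v
  define c where "c v = 2 / (h\<^sup>2 * (norm v)\<^sup>2)" for v :: "real ^ 'n"
  have "Dvv h u x v = c v * (a v - u x)" for v
    unfolding Dvv_def a_def c_def by (simp add: field_split_simps)
  then have F: "FWh \<Omega> DW h g u x = max (u x - g x) (- Min ((\<lambda>v. c v * (a v - u x)) ` DW))"
    using True by (simp add: FWh_def lambdaW_def)
  have T: "Tmap \<Omega> DW h g u x = Min ((\<lambda>v. min (g x) (a v)) ` DW)"
    using True by (simp add: Tmap_def a_def)
  have "\<forall>v\<in>DW. c v > 0"
    using assms(3,4) by (simp add: c_def)
  then show ?thesis
    unfolding F T by (rule max_neg_Min_eq_0_iff_Min_min_eq[OF assms(1,2)])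
qed (auto simp: FWh_def Tmap_def)

definition subsolutions ::
    "(real ^ 'n) set \<Rightarrow> (real ^ 'n) set \<Rightarrow> real \<Rightarrow> (real ^ 'n \<Rightarrow> real) \<Rightarrow> (real ^ 'n \<Rightarrow> real) set"
  where "subsolutions \<Omega> DW h g = {w. (\<forall>y\<in>grid h. w y \<le> g y) \<and>
     (\<forall>y\<in>gridV \<Omega> h. \<forall>v\<in>DW. 2 * w y \<le> w (y + h *\<^sub>R v) + w (y - h *\<^sub>R v))}"

lemma subsolution_le_Tmap:
  assumes "u \<in> subsolutions \<Omega> DW h g" "x \<in> grid h" "finite DW" "DW \<noteq> {}"
  shows "u x \<le> Tmap \<Omega> DW h g u x"
proof -
  have "u x \<le> (u (x + h *\<^sub>R v) + u (x - h *\<^sub>R v)) / 2"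
    if "x \<in> gridV \<Omega> h" "v \<in> DW" for v
    using assms(1) that by (simp add: subsolutions_def field_simps)
  then show ?thesis
    using assms by (auto simp: Tmap_def subsolutions_def Min_ge_iff)
qed

lemma Tmap_le_mean:
  assumes "x \<in> gridV \<Omega> h" "v \<in> DW" "finite DW"
  shows "Tmap \<Omega> DW h g u x \<le> (u (x + h *\<^sub>R v) + u (x - h *\<^sub>R v)) / 2"
proof -
  have "Tmap \<Omega> DW h g u x = Min ((\<lambda>v. min (g x) ((u (x + h *\<^sub>R v) + u (x - h *\<^sub>R v)) / 2)) ` DW)"
    using assms(1) by (simp add: Tmap_def)
  also have "\<dots> \<le> min (g x) ((u (x + h *\<^sub>R v) + u (x - h *\<^sub>R v)) / 2)"
    using assms(2,3) by (intro Min_le) auto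
  finally show ?thesis by simp
qed

lemma subsolution_update_Tmap:
  assumes u: "u \<in> subsolutions \<Omega> DW h g" and x: "x \<in> grid h"
    and DW: "finite DW" "DW \<noteq> {}" "\<forall>v\<in>DW. v \<noteq> 0" and "h > 0"
  shows "u(x := Tmap \<Omega> DW h g u x) \<in> subsolutions \<Omega> DW h g"
proof -
  define w where "w = u(x := Tmap \<Omega> DW h g u x)"
  have u_le_w: "u y \<le> w y" for y
    using subsolution_le_Tmap[OF u x DW(1,2)] by (simp add: w_def)
  have "w x \<le> g x"
    using DW(1,2) u x by (auto simp: w_def Tmap_def subsolutions_def Min_le_iff)
  then have "\<forall>y\<in>grid h. w y \<le> g y"
    using u by (auto simp: w_def subsolutions_def)
  moreover have "2 * w y \<le> w (y + h *\<^sub>R v) + w (y - h *\<^sub>R v)"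
    if y: "y \<in> gridV \<Omega> h" and v: "v \<in> DW" for y v
  proof (cases "y = x")
    case True
    have "x + h *\<^sub>R v \<noteq> x" "x - h *\<^sub>R v \<noteq> x"
      using DW(3) v \<open>h > 0\<close> by auto
    moreover have "2 * Tmap \<Omega> DW h g u x \<le> u (x + h *\<^sub>R v) + u (x - h *\<^sub>R v)"
      using Tmap_le_mean[OF y[unfolded True] v DW(1), where g = g and u = u]
      by (simp add: algebra_simps)
    ultimately show ?thesis
      using True by (simp add: w_def)
  next
    case False
    then have "2 * w y \<le> u (y + h *\<^sub>R v) + u (y - h *\<^sub>R v)"
      using u y v by (simp add: w_def subsolutions_def)
    also have "\<dots> \<le> w (y + h *\<^sub>R v) + w (y - h *\<^sub>R v)"
      by (intro add_mono u_le_w)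
    finally show ?thesis .
  qed
  ultimately show ?thesis unfolding w_def subsolutions_def by blast
qed

lemma maximal_subsolution_Tmap_fixed:
  assumes u: "u \<in> subsolutions \<Omega> DW h g"
    and max: "\<forall>w\<in>subsolutions \<Omega> DW h g. \<forall>y\<in>grid h. w y \<le> u y"
    and x: "x \<in> grid h"
    and DW: "finite DW" "DW \<noteq> {}" "\<forall>v\<in>DW. v \<noteq> 0" and "h > 0"
  shows "Tmap \<Omega> DW h g u x = u x"
  using max subsolution_update_Tmap[OF u x DW \<open>h > 0\<close>] x
    subsolution_le_Tmap[OF u x DW(1,2)]
  by (metis (no_types, lifting) antisym fun_upd_same)

lemma maximal_subsolution_exists:
  assumes "h > 0"
    and closed: "\<forall>x\<in>gridV \<Omega> h. \<forall>v\<in>DW. x + h *\<^sub>R v \<in> grid h \<and> x - h *\<^sub>R v \<in> grid h"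
  obtains u where "u \<in> subsolutions \<Omega> DW h g"
    and "\<forall>w\<in>subsolutions \<Omega> DW h g. \<forall>y\<in>grid h. w y \<le> u y"
proof
  let ?S = "subsolutions \<Omega> DW h g"
  define u where "u y = Sup ((\<lambda>w. w y) ` ?S)" for y
  have "(\<lambda>_. Min (g ` grid h)) \<in> ?S"
    using finite_grid[OF \<open>h > 0\<close>] by (auto simp: subsolutions_def intro: Min_le)
  then have S_ne: "?S \<noteq> {}" by blast
  have bdd: "bdd_above ((\<lambda>w. w y) ` ?S)" if "y \<in> grid h" for y
    using that unfolding subsolutions_def bdd_above_def by blast
  show upper: "\<forall>w\<in>?S. \<forall>y\<in>grid h. w y \<le> u y"
    unfolding u_def using bdd by (auto intro: cSup_upper)
  have "u y \<le> g y" if "y \<in> grid h" for y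
    unfolding u_def using S_ne that by (auto intro!: cSup_least simp: subsolutions_def)
  moreover have "2 * u y \<le> u (y + h *\<^sub>R v) + u (y - h *\<^sub>R v)"
    if y: "y \<in> gridV \<Omega> h" and v: "v \<in> DW" for y v
  proof -
    have "w y \<le> (u (y + h *\<^sub>R v) + u (y - h *\<^sub>R v)) / 2" if w: "w \<in> ?S" for w
    proof -
      have "2 * w y \<le> w (y + h *\<^sub>R v) + w (y - h *\<^sub>R v)"
        using w y v by (simp add: subsolutions_def)
      also have "\<dots> \<le> u (y + h *\<^sub>R v) + u (y - h *\<^sub>R v)"
        using upper w closed y v by (intro add_mono) auto
      finally show ?thesis by simp
    qed
    then have "u y \<le> (u (y + h *\<^sub>R v) + u (y - h *\<^sub>R v)) / 2"
      unfolding u_def[of y] by (rule cSUP_least[OF S_ne])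
    then show ?thesis by simp
  qed
  ultimately show "u \<in> ?S" by (simp add: subsolutions_def)
qed

theorem mainTheorem9:
  fixes \<Omega> DW :: "(real ^ 'n) set" and h :: real and g :: "real ^ 'n \<Rightarrow> real"
  assumes "\<Omega> \<subseteq> cubeD" and "h > 0" and "grid_direction_set DW"
    and "\<forall>x\<in>gridV \<Omega> h. \<forall>v\<in>DW. x + h *\<^sub>R v \<in> grid h \<and> x - h *\<^sub>R v \<in> grid h"
  shows "(\<exists>u :: real ^ 'n \<Rightarrow> real. \<forall>x\<in>grid h. FWh \<Omega> DW h g u x = 0) \<and>
         (\<forall>u :: real ^ 'n \<Rightarrow> real. (\<forall>x\<in>grid h. FWh \<Omega> DW h g u x = 0) \<longrightarrow>
            (\<forall>x\<in>grid h. Tmap \<Omega> DW h g u x = u x))"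
proof -
  have DW: "finite DW" "DW \<noteq> {}" "\<forall>v\<in>DW. v \<noteq> 0"
    using assms(3) grid_direction_set_nonempty unfolding grid_direction_set_def by auto
  note F_iff_T = FWh_eq_0_iff_Tmap_fixed[OF DW \<open>h > 0\<close>]
  obtain u where "u \<in> subsolutions \<Omega> DW h g"
    and "\<forall>w\<in>subsolutions \<Omega> DW h g. \<forall>y\<in>grid h. w y \<le> u y"
    using maximal_subsolution_exists[OF \<open>h > 0\<close> assms(4)] by blast
  then have "\<forall>x\<in>grid h. Tmap \<Omega> DW h g u x = u x"
    using maximal_subsolution_Tmap_fixed[OF _ _ _ DW \<open>h > 0\<close>] by blast
  then show ?thesis using F_iff_T by blast
qed

end
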